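(* Let $G=(V,E)$ be a finite multigraph and suppose the vertices $v\neq w\in V$ form a 3-connection in $G$, i.e. $\lambda_G(v,w)\ge3$. If a partition $\pi$ of $V$ is such that the quotient $G^\pi$ is a cactus, then $v$ and $w$ lie in the same block of $\pi$.
   Context: $\lambda_G(v,w)$ is the minimal number of edges whose deletion disconnects $v$ and $w$ (equivalently the maximal number of edge-disjoint paths between them). $G^\pi$ identifies the vertices in each block of $\pi$. A cactus is a connected multigraph in which every edge belongs to exactly one simple cycle (loops and pairs of parallel edges count as cycles). *)

theory Defs
  imports Main "HOL-Library.Disjoint_Sets"
begin

text \<open>A finite multigraph is given by a vertex set V, an edge index set E and an
endpoint map ends; edge e joins fst (ends e) and snd (ends e) (orientation irrelevant;
loops allowed when both endpoints coincide, parallel edges allowed).\<close>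

definition multigraph :: "'a set \<Rightarrow> 'e set \<Rightarrow> ('e \<Rightarrow> 'a \<times> 'a) \<Rightarrow> bool" where
  "multigraph V E ends \<longleftrightarrow> finite V \<and> finite E \<and>
     (\<forall>e\<in>E. fst (ends e) \<in> V \<and> snd (ends e) \<in> V)"

inductive reach :: "'a set \<Rightarrow> 'e set \<Rightarrow> ('e \<Rightarrow> 'a \<times> 'a) \<Rightarrow> 'a \<Rightarrow> 'a \<Rightarrow> bool"
  for V E ends where
  refl: "x \<in> V \<Longrightarrow> reach V E ends x x"
| step: "reach V E ends x y \<Longrightarrow> e \<in> E \<Longrightarrow> (ends e = (y, z) \<or> ends e = (z, y))
          \<Longrightarrow> reach V E ends x z"

definition lambda :: "'a set \<Rightarrow> 'e set \<Rightarrow> ('e \<Rightarrow> 'a \<times> 'a) \<Rightarrow> 'a \<Rightarrow> 'a \<Rightarrow> nat" where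
  "lambda V E ends v w = (LEAST k. \<exists>F. F \<subseteq> E \<and> card F = k \<and> \<not> reach V (E - F) ends v w)"

definition connected_mg :: "'a set \<Rightarrow> 'e set \<Rightarrow> ('e \<Rightarrow> 'a \<times> 'a) \<Rightarrow> bool" where
  "connected_mg V E ends \<longleftrightarrow> (\<forall>x\<in>V. \<forall>y\<in>V. reach V E ends x y)"

text \<open>Loops (k = 1) and pairs of parallel edges (k = 2) are cycles.\<close>
definition simple_cycle :: "'a set \<Rightarrow> 'e set \<Rightarrow> ('e \<Rightarrow> 'a \<times> 'a) \<Rightarrow> 'e set \<Rightarrow> bool" where
  "simple_cycle V E ends C \<longleftrightarrow>
    (\<exists>xs es. es \<noteq> [] \<and> length xs = length es \<and> distinct xs \<and> distinct es \<and>
       set es = C \<and> set xs \<subseteq> V \<and>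
       (\<forall>i < length es. es ! i \<in> E \<and>
          (ends (es ! i) = (xs ! i, xs ! ((i + 1) mod length es)) \<or>
           ends (es ! i) = (xs ! ((i + 1) mod length es), xs ! i))))"

definition cactus :: "'a set \<Rightarrow> 'e set \<Rightarrow> ('e \<Rightarrow> 'a \<times> 'a) \<Rightarrow> bool" where
  "cactus V E ends \<longleftrightarrow> connected_mg V E ends \<and>
     (\<forall>e\<in>E. \<exists>!C. simple_cycle V E ends C \<and> e \<in> C)"

definition blk :: "'a set set \<Rightarrow> 'a \<Rightarrow> 'a set" where
  "blk pi x = (THE B. B \<in> pi \<and> x \<in> B)"

text \<open>Quotient G^pi: vertices are the blocks, same edges, endpoints mapped to blocks.\<close>
definition quot_ends :: "'a set set \<Rightarrow> ('e \<Rightarrow> 'a \<times> 'a) \<Rightarrow> 'e \<Rightarrow> 'a set \<times> 'a set" where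
  "quot_ends pi ends e = (blk pi (fst (ends e)), blk pi (snd (ends e)))"

end

theory Submission
  imports Defs
begin

text \<open>Suppose v and w lie in different blocks B_v and B_w.  In the cactus H = G^pi let K be
the component of B_w in H - B_v and S the remaining blocks; both sides induce connected
subgraphs of H.  Any two edges of the cut between S and K close up, via a path in S and a
path in K, to a simple cycle of H meeting the cut in exactly these two edges.  If the cut had
three edges e1, e2, e3, the cycles through e1, e2 and through e1, e3 would be two different
cycles containing e1, which a cactus forbids.  So the cut has at most two edges; but it
separates v from w in G, contradicting lambda_G(v, w) \<ge> 3.\<close>

definition joins :: "('e \<Rightarrow> 'a \<times> 'a) \<Rightarrow> 'e \<Rightarrow> 'a \<Rightarrow> 'a \<Rightarrow> bool" where
  "joins ends e a b \<longleftrightarrow> ends e = (a, b) \<or> ends e = (b, a)"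

definition induced_edges :: "'e set \<Rightarrow> ('e \<Rightarrow> 'a \<times> 'a) \<Rightarrow> 'a set \<Rightarrow> 'e set" where
  "induced_edges E ends S = {e\<in>E. fst (ends e) \<in> S \<and> snd (ends e) \<in> S}"

definition cut_edges :: "'e set \<Rightarrow> ('e \<Rightarrow> 'a \<times> 'a) \<Rightarrow> 'a set \<Rightarrow> 'a set \<Rightarrow> 'e set" where
  "cut_edges E ends S K =
     {e\<in>E. fst (ends e) \<in> S \<and> snd (ends e) \<in> K \<or> fst (ends e) \<in> K \<and> snd (ends e) \<in> S}"

fun is_walk :: "('e \<Rightarrow> 'a \<times> 'a) \<Rightarrow> 'a list \<Rightarrow> 'e list \<Rightarrow> bool" where
  "is_walk ends [x] [] = True"
| "is_walk ends (x # y # xs) (e # es) = (joins ends e x y \<and> is_walk ends (y # xs) es)"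
| "is_walk ends _ _ = False"

definition path_in :: "'a set \<Rightarrow> 'e set \<Rightarrow> ('e \<Rightarrow> 'a \<times> 'a) \<Rightarrow> 'a list \<Rightarrow> 'e list \<Rightarrow> bool" where
  "path_in W F ends xs es \<longleftrightarrow>
     is_walk ends xs es \<and> distinct xs \<and> distinct es \<and> set xs \<subseteq> W \<and> set es \<subseteq> F"

lemma joins_sym: "joins ends e a b \<Longrightarrow> joins ends e b a"
  by (auto simp: joins_def)

lemma is_walk_append:
  "is_walk ends ps fs \<Longrightarrow> is_walk ends qs gs \<Longrightarrow> joins ends e (last ps) (hd qs)
   \<Longrightarrow> is_walk ends (ps @ qs) (fs @ e # gs)"
proof (induction ends ps fs rule: is_walk.induct)
  case (1 ends x)
  then show ?case by (cases qs) auto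
qed auto

lemma is_walk_nth:
  "is_walk ends xs es \<Longrightarrow> length xs = Suc (length es) \<and>
     (\<forall>i<length es. joins ends (es ! i) (xs ! i) (xs ! Suc i))"
proof (induction ends xs es rule: is_walk.induct)
  case (2 ends x y xs e es)
  then show ?case by (auto simp: nth_Cons split: nat.splits)
qed auto

lemma is_walk_nonempty: "is_walk ends xs es \<Longrightarrow> xs \<noteq> []"
  using is_walk_nth by fastforce

lemma is_walk_edge_ends:
  "is_walk ends xs es \<Longrightarrow> f \<in> set es \<Longrightarrow> fst (ends f) \<in> set xs \<and> snd (ends f) \<in> set xs"
  by (induction ends xs es rule: is_walk.induct) (auto simp: joins_def)

lemma is_walk_take:
  "is_walk ends xs es \<Longrightarrow> i < length xs \<Longrightarrow> is_walk ends (take (Suc i) xs) (take i es)"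
proof (induction ends xs es arbitrary: i rule: is_walk.induct)
  case (2 ends x y xs e es)
  then show ?case by (cases i) auto
qed auto

lemma reach_start_in: "reach W F ends x y \<Longrightarrow> x \<in> W"
  by (induction rule: reach.induct) auto

lemma reach_end_in:
  "reach W F ends x y \<Longrightarrow> \<forall>e\<in>F. fst (ends e) \<in> W \<and> snd (ends e) \<in> W \<Longrightarrow> y \<in> W"
  by (induction rule: reach.induct) auto

lemma reach_trans: "reach W F ends y z \<Longrightarrow> reach W F ends x y \<Longrightarrow> reach W F ends x z"
  by (induction rule: reach.induct) (auto intro: reach.step)

lemma reach_sym:
  assumes "reach W F ends x y" "\<forall>e\<in>F. fst (ends e) \<in> W \<and> snd (ends e) \<in> W"
  shows "reach W F ends y x"
  using assms
proof (induction rule: reach.induct)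
  case (refl x)
  then show ?case by (blast intro: reach.refl)
next
  case (step x y e z)
  have "z \<in> W" using step.hyps(2,3) step.prems by auto
  then have "reach W F ends z y" using step.hyps(2,3) by (blast intro: reach.refl reach.step)
  then show ?case using step.IH step.prems by (blast intro: reach_trans)
qed

lemma reach_mono: "reach W F ends x y \<Longrightarrow> F \<subseteq> F' \<Longrightarrow> reach W F' ends x y"
  by (induction rule: reach.induct) (auto intro: reach.refl reach.step)

lemma reach_invariant:
  "reach W F ends x y \<Longrightarrow> \<forall>e\<in>F. P (fst (ends e)) \<longleftrightarrow> P (snd (ends e)) \<Longrightarrow> P x \<Longrightarrow> P y"
  by (induction rule: reach.induct) auto

lemma connected_mgI_root:
  assumes "\<forall>x\<in>W. reach W F ends r x" "\<forall>e\<in>F. fst (ends e) \<in> W \<and> snd (ends e) \<in> W"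
  shows "connected_mg W F ends"
  unfolding connected_mg_def using assms by (blast intro: reach_trans reach_sym)

lemma reach_within_component:
  assumes "reach W F ends b x"
  shows "reach {y. reach W F ends b y} (induced_edges F ends {y. reach W F ends b y}) ends b x"
proof -
  define R where "R = {y. reach W F ends b y}"
  have "reach R (induced_edges F ends R) ends b x" if "reach W F ends u x" "u = b" for u
    using that
  proof (induction rule: reach.induct)
    case (refl x)
    then show ?case by (simp add: R_def reach.refl)
  next
    case (step x y e z)
    have "reach W F ends b z" using step.hyps step.prems by (blast intro: reach.step)
    then have "e \<in> induced_edges F ends R"
      using step.hyps step.prems by (auto simp: R_def induced_edges_def)
    then show ?case by (rule reach.step[OF step.IH[OF step.prems] _ step.hyps(3)])
  qed
  then show ?thesis using assms by (simp add: R_def)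
qed

lemma reach_imp_path_in:
  assumes "reach W F ends x y" "\<forall>e\<in>F. fst (ends e) \<in> W \<and> snd (ends e) \<in> W"
  shows "\<exists>xs es. path_in W F ends xs es \<and> hd xs = x \<and> last xs = y"
  using assms
proof (induction rule: reach.induct)
  case (refl x)
  then show ?case by (intro exI[of _ "[x]"] exI[of _ "[]"]) (auto simp: path_in_def)
next
  case (step x y e z)
  then obtain xs es where P: "path_in W F ends xs es" "hd xs = x" "last xs = y" by blast
  have walk: "is_walk ends xs es" using P(1) by (simp add: path_in_def)
  have "xs \<noteq> []" using is_walk_nonempty walk by blast
  show ?case
  proof (cases "z \<in> set xs")
    case True
    then obtain i where i: "i < length xs" "xs ! i = z" by (auto simp: in_set_conv_nth)
    have "path_in W F ends (take (Suc i) xs) (take i es)"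
      using P(1) is_walk_take[OF walk i(1)] by (auto simp: path_in_def dest: in_set_takeD)
    moreover have "hd (take (Suc i) xs) = x"
      using P(2) \<open>xs \<noteq> []\<close> by (simp add: hd_take)
    moreover have "last (take (Suc i) xs) = z"
      using i by (simp add: take_Suc_conv_app_nth)
    ultimately show ?thesis by blast
  next
    case False
    then have "e \<notin> set es"
      using is_walk_edge_ends[OF walk] step.hyps(3) by fastforce
    moreover have "is_walk ends (xs @ [z]) (es @ [e])"
      using is_walk_append[OF walk, of "[z]" "[]" e] step.hyps(3) P(3) by (auto simp: joins_def)
    moreover have "z \<in> W" using step.hyps(2,3) step.prems by auto
    ultimately have "path_in W F ends (xs @ [z]) (es @ [e])"
      using P(1) False step.hyps(2) by (auto simp: path_in_def)
    then show ?thesis using P(2) \<open>xs \<noteq> []\<close> by fastforce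
  qed
qed

lemma closed_path_simple_cycle:
  assumes "path_in V E ends cs ds" "e \<in> E - set ds" "joins ends e (last cs) (hd cs)"
  shows "simple_cycle V E ends (insert e (set ds))"
proof -
  have "is_walk ends cs ds" using assms(1) by (simp add: path_in_def)
  then have "cs \<noteq> []" and "is_walk ends (cs @ [hd cs]) (ds @ [e])"
    using is_walk_nonempty is_walk_append[of ends cs ds "[hd cs]" "[]" e] assms(3) by auto
  from is_walk_nth[OF this(2)] have len: "length cs = length (ds @ [e])"
    and J: "\<forall>i<length (ds @ [e]).
              joins ends ((ds @ [e]) ! i) ((cs @ [hd cs]) ! i) ((cs @ [hd cs]) ! Suc i)"
    by auto
  show ?thesis unfolding simple_cycle_def
  proof (intro exI[of _ cs] exI[of _ "ds @ [e]"] conjI allI impI)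
    fix i assume i: "i < length (ds @ [e])"
    have "(cs @ [hd cs]) ! Suc i = cs ! ((i + 1) mod length (ds @ [e]))"
    proof (cases "Suc i = length (ds @ [e])")
      case True
      then show ?thesis using len \<open>cs \<noteq> []\<close> by (simp add: nth_append hd_conv_nth)
    next
      case False
      then show ?thesis using i len by (simp add: nth_append)
    qed
    moreover have "(cs @ [hd cs]) ! i = cs ! i" using i len by (simp add: nth_append)
    ultimately show "ends ((ds @ [e]) ! i) = (cs ! i, cs ! ((i + 1) mod length (ds @ [e]))) \<or>
        ends ((ds @ [e]) ! i) = (cs ! ((i + 1) mod length (ds @ [e])), cs ! i)"
      using J i by (auto simp: joins_def)
  qed (use len assms(1,2) in \<open>auto simp: path_in_def nth_append\<close>)
qed

lemma simple_cycle_of_two_paths: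
  assumes P: "path_in S F1 ends ps fs" and Q: "path_in K F2 ends qs gs"
    and "S \<inter> K = {}" "F1 \<inter> F2 = {}" "S \<union> K \<subseteq> V" "F1 \<union> F2 \<subseteq> E"
    and "e1 \<in> E - (F1 \<union> F2)" "e2 \<in> E - (F1 \<union> F2)" "e1 \<noteq> e2"
    and "joins ends e1 (last qs) (hd ps)" "joins ends e2 (last ps) (hd qs)"
  shows "simple_cycle V E ends (insert e1 (insert e2 (set fs \<union> set gs)))"
proof -
  have walks: "is_walk ends ps fs" "is_walk ends qs gs"
    using P Q by (simp_all add: path_in_def)
  have "ps \<noteq> []" "qs \<noteq> []" using walks is_walk_nonempty by blast+
  have "path_in V E ends (ps @ qs) (fs @ e2 # gs)"
    using P Q assms(3-9,11) is_walk_append[OF walks, of e2] by (auto simp: path_in_def)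
  moreover have "e1 \<in> E - set (fs @ e2 # gs)"
    using P Q assms(7,9) by (auto simp: path_in_def)
  moreover have "joins ends e1 (last (ps @ qs)) (hd (ps @ qs))"
    using assms(10) \<open>ps \<noteq> []\<close> \<open>qs \<noteq> []\<close> by simp
  ultimately have "simple_cycle V E ends (insert e1 (set (fs @ e2 # gs)))"
    by (rule closed_path_simple_cycle)
  then show ?thesis by (simp add: insert_commute)
qed

lemma connected_induced_path_in:
  assumes "connected_mg S (induced_edges E ends S) ends" "x \<in> S" "y \<in> S"
  obtains xs es where "path_in S (induced_edges E ends S) ends xs es" "hd xs = x" "last xs = y"
  using assms reach_imp_path_in[of S "induced_edges E ends S" ends x y]
  unfolding connected_mg_def induced_edges_def by blast

lemma cut_edge_joins:
  assumes "e \<in> cut_edges E ends S K"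
  obtains a b where "a \<in> S" "b \<in> K" "joins ends e a b"
  using assms by (cases "ends e") (auto simp: cut_edges_def joins_def)

lemma simple_cycle_through_two_cut_edges:
  assumes S: "connected_mg S (induced_edges E ends S) ends"
    and K: "connected_mg K (induced_edges E ends K) ends"
    and "S \<inter> K = {}" "S \<union> K \<subseteq> V"
    and "e \<in> cut_edges E ends S K" "e' \<in> cut_edges E ends S K" "e \<noteq> e'"
  shows "\<exists>C. simple_cycle V E ends C \<and> C \<inter> cut_edges E ends S K = {e, e'}"
proof -
  obtain a1 b1 where ab1: "a1 \<in> S" "b1 \<in> K" "joins ends e a1 b1"
    using assms(5) by (rule cut_edge_joins)
  obtain a2 b2 where ab2: "a2 \<in> S" "b2 \<in> K" "joins ends e' a2 b2"
    using assms(6) by (rule cut_edge_joins)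
  obtain ps fs where P: "path_in S (induced_edges E ends S) ends ps fs" "hd ps = a1" "last ps = a2"
    using S ab1(1) ab2(1) by (rule connected_induced_path_in)
  obtain qs gs where Q: "path_in K (induced_edges E ends K) ends qs gs" "hd qs = b2" "last qs = b1"
    using K ab2(2) ab1(2) by (rule connected_induced_path_in)
  have cut_not_induced:
    "cut_edges E ends S K \<inter> (induced_edges E ends S \<union> induced_edges E ends K) = {}"
    using assms(3) by (auto simp: cut_edges_def induced_edges_def)
  have "simple_cycle V E ends (insert e (insert e' (set fs \<union> set gs)))"
  proof (rule simple_cycle_of_two_paths[OF P(1) Q(1) assms(3)])
    show "induced_edges E ends S \<inter> induced_edges E ends K = {}"
      using assms(3) by (auto simp: induced_edges_def)
  qed (use assms(4-7) ab1 ab2 P Q cut_not_induced joins_sym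
       in \<open>auto simp: induced_edges_def cut_edges_def\<close>)
  moreover have "set fs \<union> set gs \<subseteq> induced_edges E ends S \<union> induced_edges E ends K"
    using P(1) Q(1) by (auto simp: path_in_def)
  ultimately show ?thesis
    using assms(5,6) cut_not_induced by blast
qed

lemma cactus_card_cut_edges_le_2:
  assumes "cactus V E ends"
    and "connected_mg S (induced_edges E ends S) ends" "connected_mg K (induced_edges E ends K) ends"
    and "S \<inter> K = {}" "S \<union> K \<subseteq> V"
  shows "card (cut_edges E ends S K) \<le> 2"
proof (rule ccontr)
  assume "\<not> ?thesis"
  then obtain e1 e2 e3 where e123: "{e1, e2, e3} \<subseteq> cut_edges E ends S K"
    "e1 \<noteq> e2" "e1 \<noteq> e3" "e2 \<noteq> e3"
    by (auto simp: numeral_3_eq_3 card_le_Suc_iff not_le Suc_le_eq[symmetric])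
  obtain C12 where C12: "simple_cycle V E ends C12" "C12 \<inter> cut_edges E ends S K = {e1, e2}"
    using simple_cycle_through_two_cut_edges[OF assms(2-5)] e123 by blast
  obtain C13 where C13: "simple_cycle V E ends C13" "C13 \<inter> cut_edges E ends S K = {e1, e3}"
    using simple_cycle_through_two_cut_edges[OF assms(2-5)] e123 by blast
  have "e1 \<in> E" using e123(1) by (auto simp: cut_edges_def)
  then have "\<exists>!C. simple_cycle V E ends C \<and> e1 \<in> C"
    using assms(1) by (simp add: cactus_def)
  then have "C12 = C13" using C12 C13 by blast
  then show False using C12(2) C13(2) e123(2-4) by (metis doubleton_eq_iff)
qed

lemma reach_outside_closed_set:
  assumes wf: "\<forall>e\<in>E. fst (ends e) \<in> V \<and> snd (ends e) \<in> V"
    and "K \<subseteq> V - {a}"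
    and closed: "\<And>y e z. y \<in> K \<Longrightarrow> e \<in> E \<Longrightarrow> joins ends e y z \<Longrightarrow> z \<noteq> a \<Longrightarrow> z \<in> K"
    and "reach V E ends a x" "x \<notin> K"
  shows "reach (V - K) (induced_edges E ends (V - K)) ends a x"
proof -
  have "reach (V - K) (induced_edges E ends (V - K)) ends a x"
    if "reach V E ends u x" "u = a" "x \<notin> K" for u x
    using that
  proof (induction rule: reach.induct)
    case (refl x)
    then show ?case by (simp add: reach.refl)
  next
    case (step x y e z)
    have "y \<in> V" "z \<in> V" using reach_end_in[OF step.hyps(1) wf] step.hyps(2,3) wf by auto
    show ?case
    proof (cases "y \<in> K")
      case False
      then have "e \<in> induced_edges E ends (V - K)"
        using step.hyps(2,3) step.prems \<open>y \<in> V\<close> \<open>z \<in> V\<close> by (auto simp: induced_edges_def)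
      then show ?thesis by (rule reach.step[OF step.IH[OF step.prems(1) False] _ step.hyps(3)])
    next
      case True
      \<comment> \<open>a walk that has entered K can leave it only through a\<close>
      then have "z = a"
        using closed step.hyps(2,3) step.prems(2) by (auto simp: joins_def)
      moreover have "a \<in> V - K" using reach_start_in[OF assms(4)] assms(2) by blast
      ultimately show ?thesis by (simp add: reach.refl)
    qed
  qed
  then show ?thesis using assms(4,5) by blast
qed

lemma connected_mg_split:
  assumes conn: "connected_mg V E ends" and wf: "\<forall>e\<in>E. fst (ends e) \<in> V \<and> snd (ends e) \<in> V"
    and "a \<in> V" "b \<in> V" "a \<noteq> b"
  obtains S K where "S \<inter> K = {}" "S \<union> K = V" "a \<in> S" "b \<in> K"
    "connected_mg S (induced_edges E ends S) ends" "connected_mg K (induced_edges E ends K) ends"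
proof -
  define Ea where "Ea = induced_edges E ends (V - {a})"
  define K where "K = {x. reach (V - {a}) Ea ends b x}"
  define S where "S = V - K"
  have Ea_wf: "\<forall>e\<in>Ea. fst (ends e) \<in> V - {a} \<and> snd (ends e) \<in> V - {a}"
    by (simp add: Ea_def induced_edges_def)
  have K_sub: "K \<subseteq> V - {a}"
    unfolding K_def using reach_end_in[OF _ Ea_wf] by blast
  have "b \<in> K" using assms(4,5) by (simp add: K_def reach.refl)
  have "a \<in> S" using K_sub assms(3) by (auto simp: S_def)
  have K_conn: "connected_mg K (induced_edges E ends K) ends"
  proof (rule connected_mgI_root)
    show "\<forall>x\<in>K. reach K (induced_edges E ends K) ends b x"
    proof
      fix x assume "x \<in> K"
      then have "reach K (induced_edges Ea ends K) ends b x"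
        unfolding K_def by (simp add: reach_within_component)
      moreover have "induced_edges Ea ends K \<subseteq> induced_edges E ends K"
        by (auto simp: Ea_def induced_edges_def)
      ultimately show "reach K (induced_edges E ends K) ends b x" by (rule reach_mono)
    qed
  qed (simp add: induced_edges_def)
  have K_closed: "z \<in> K"
    if "y \<in> K" "e \<in> E" "joins ends e y z" "z \<noteq> a" for y e z
  proof -
    have "e \<in> Ea"
      using that K_sub wf by (auto simp: Ea_def induced_edges_def joins_def)
    then show "z \<in> K"
      using reach.step[of "V - {a}" Ea ends b y e z] that(1,3) by (simp add: K_def joins_def)
  qed
  have reach_S: "reach S (induced_edges E ends S) ends a x" if "reach V E ends a x" "x \<in> S" for x
    using reach_outside_closed_set[OF wf _ K_closed that(1)] K_sub that(2) by (simp add: S_def)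
  have S_conn: "connected_mg S (induced_edges E ends S) ends"
  proof (rule connected_mgI_root)
    show "\<forall>x\<in>S. reach S (induced_edges E ends S) ends a x"
    proof
      fix x assume "x \<in> S"
      moreover have "reach V E ends a x"
        using conn \<open>a \<in> V\<close> \<open>x \<in> S\<close> by (simp add: connected_mg_def S_def)
      ultimately show "reach S (induced_edges E ends S) ends a x" using reach_S by blast
    qed
  qed (simp add: induced_edges_def)
  have "S \<inter> K = {}" "S \<union> K = V" using K_sub by (auto simp: S_def)
  then show ?thesis using \<open>a \<in> S\<close> \<open>b \<in> K\<close> S_conn K_conn by (rule that)
qed

lemma lambda_le_card:
  assumes "F \<subseteq> E" "\<not> reach V (E - F) ends v w"
  shows "lambda V E ends v w \<le> card F"
  unfolding lambda_def by (rule Least_le) (use assms in blast)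

lemma blk_partition_on:
  assumes "partition_on V pi" "x \<in> V"
  shows "blk pi x \<in> pi" "x \<in> blk pi x"
proof -
  have "\<exists>!B. B \<in> pi \<and> x \<in> B"
    using assms by (auto simp: partition_on_def disjoint_def)
  then have "blk pi x \<in> pi \<and> x \<in> blk pi x"
    unfolding blk_def by (rule theI')
  then show "blk pi x \<in> pi" "x \<in> blk pi x" by simp_all
qed

lemma quot_ends_in_partition:
  assumes "multigraph V E ends" "partition_on V pi" "e \<in> E"
  shows "fst (quot_ends pi ends e) \<in> pi" "snd (quot_ends pi ends e) \<in> pi"
  using assms blk_partition_on[OF assms(2)] by (simp_all add: multigraph_def quot_ends_def)

lemma reach_avoiding_quotient_cut:
  assumes "multigraph V E ends" "partition_on V pi" "S \<inter> K = {}" "S \<union> K = pi"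
    and "reach V (E - cut_edges E (quot_ends pi ends) S K) ends x y" "blk pi x \<in> S"
  shows "blk pi y \<in> S"
proof (rule reach_invariant[where P = "\<lambda>x. blk pi x \<in> S", OF assms(5) _ assms(6)])
  show "\<forall>e\<in>E - cut_edges E (quot_ends pi ends) S K.
          blk pi (fst (ends e)) \<in> S \<longleftrightarrow> blk pi (snd (ends e)) \<in> S"
    using quot_ends_in_partition[OF assms(1,2)] assms(3,4)
    by (fastforce simp: cut_edges_def quot_ends_def)
qed

theorem lemma2p5:
  fixes V :: "'a set" and E :: "'e set" and ends :: "'e \<Rightarrow> 'a \<times> 'a"
    and pi :: "'a set set" and v w :: 'a
  assumes "multigraph V E ends"
    and "v \<in> V" and "w \<in> V" and "v \<noteq> w"
    and "lambda V E ends v w \<ge> 3"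
    and "partition_on V pi"
    and "cactus pi E (quot_ends pi ends)"
  shows "\<exists>B\<in>pi. v \<in> B \<and> w \<in> B"
proof (rule ccontr)
  assume "\<not> (\<exists>B\<in>pi. v \<in> B \<and> w \<in> B)"
  then have "blk pi v \<noteq> blk pi w"
    using blk_partition_on[OF assms(6)] assms(2,3) by metis
  let ?qe = "quot_ends pi ends"
  have "\<forall>e\<in>E. fst (?qe e) \<in> pi \<and> snd (?qe e) \<in> pi"
    using quot_ends_in_partition[OF assms(1,6)] by blast
  moreover have "connected_mg pi E ?qe" using assms(7) by (simp add: cactus_def)
  ultimately obtain S K where SK: "S \<inter> K = {}" "S \<union> K = pi" "blk pi v \<in> S" "blk pi w \<in> K"
    "connected_mg S (induced_edges E ?qe S) ?qe" "connected_mg K (induced_edges E ?qe K) ?qe"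
    using connected_mg_split blk_partition_on[OF assms(6)] assms(2,3) \<open>blk pi v \<noteq> blk pi w\<close>
    by metis
  define D where "D = cut_edges E ?qe S K"
  have "card D \<le> 2"
    using cactus_card_cut_edges_le_2[OF assms(7) SK(5,6,1)] SK(2) by (simp add: D_def)
  have "\<not> reach V (E - D) ends v w"
    using reach_avoiding_quotient_cut[OF assms(1,6) SK(1,2) _ SK(3)] SK(1,4)
    by (auto simp: D_def)
  then have "lambda V E ends v w \<le> card D"
    by (intro lambda_le_card) (auto simp: D_def cut_edges_def)
  then show False using assms(5) \<open>card D \<le> 2\<close> by simp
qed

end
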